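(* Let $\eta_0,\eta_1,\eta_2,\dots$ be an effective enumeration of closed λ-terms with $\eta_i\twoheadrightarrow_{\beta\eta}\mathtt{I}$ for all $i$. Let $\mathbf{I}^\Omega$ and $\boldsymbol{\eta}^\Omega$ be closed λ-terms (defined via the fixed point combinator) such that $\mathbf{I}^\Omega yx=_\beta[y\Omega^{\sim n}x]_{n\in\mathbb{N}}=[yx,[y\Omega x,[y\Omega\Omega x,\dots]]]$ and $\boldsymbol{\eta}^\Omega yx=_\beta[y\Omega^{\sim n}(\eta_nx)]_{n\in\mathbb{N}}=[y(\eta_0x),[y\Omega(\eta_1x),[y\Omega\Omega(\eta_2x),\dots]]]$. Then $\mathcal{B}\omega\vdash\mathbf{I}^\Omega=\boldsymbol{\eta}^\Omega$.
   Context: $\mathtt{I}=\lambda x.x$, $\Omega=(\lambda x.xx)(\lambda x.xx)$, $M\Omega^{\sim n}$ denotes $M\Omega\cdots\Omega$ ($n$ copies). Pairs/tuples: $[M_1,\dots,M_n]=\lambda z.zM_1\cdots M_n$ with $z$ fresh. An enumeration $(M_n)_n$ of closed terms is effective if there is a closed $F$ with $F\,\underline{n}=_\beta M_n$ for all $n$, where $\underline n=\lambda fz.f^n(z)$ is the Church numeral; then the stream $[M_n]_{n\in\mathbb{N}}$ is a λ-term with $[M_n]_{n\in\mathbb{N}}=_\beta[M_0,[M_{n+1}]_{n\in\mathbb{N}}]$. $\mathcal{B}=\{(M,N):BT(M)=BT(N)\}$; the ω-rule: if $MP=NP$ for all closed $P$ then $M=N$; $\mathcal{B}\omega$ is the least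 λ-theory containing $\mathcal{B}$ closed under the ω-rule. *)

theory Defs
  imports Main
begin

datatype lterm = Var nat | App lterm lterm | Abs lterm

primrec lift :: "lterm \<Rightarrow> nat \<Rightarrow> lterm" where
  "lift (Var i) k = (if i < k then Var i else Var (i + 1))"
| "lift (App s t) k = App (lift s k) (lift t k)"
| "lift (Abs s) k = Abs (lift s (k + 1))"

primrec subst :: "lterm \<Rightarrow> lterm \<Rightarrow> nat \<Rightarrow> lterm" where
  "subst (Var i) s k = (if k < i then Var (i - 1) else if i = k then s else Var i)"
| "subst (App t u) s k = App (subst t s k) (subst u s k)"
| "subst (Abs t) s k = Abs (subst t (lift s 0) (k + 1))"

primrec closedat :: "lterm \<Rightarrow> nat \<Rightarrow> bool" where
  "closedat (Var i) k = (i < k)"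
| "closedat (App s t) k = (closedat s k \<and> closedat t k)"
| "closedat (Abs s) k = closedat s (k + 1)"

definition closed :: "lterm \<Rightarrow> bool" where
  "closed t = closedat t 0"

inductive beta :: "lterm \<Rightarrow> lterm \<Rightarrow> bool" where
  beta_redex: "beta (App (Abs s) t) (subst s t 0)"
| beta_appL: "beta s t \<Longrightarrow> beta (App s u) (App t u)"
| beta_appR: "beta s t \<Longrightarrow> beta (App u s) (App u t)"
| beta_abs: "beta s t \<Longrightarrow> beta (Abs s) (Abs t)"

inductive eta :: "lterm \<Rightarrow> lterm \<Rightarrow> bool" where
  eta_redex: "eta (Abs (App (lift s 0) (Var 0))) s"
| eta_appL: "eta s t \<Longrightarrow> eta (App s u) (App t u)"
| eta_appR: "eta s t \<Longrightarrow> eta (App u s) (App u t)"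
| eta_abs: "eta s t \<Longrightarrow> eta (Abs s) (Abs t)"

definition beq :: "lterm \<Rightarrow> lterm \<Rightarrow> bool" where
  "beq = equivclp beta"

definition beta_eta_red :: "lterm \<Rightarrow> lterm \<Rightarrow> bool" where
  "beta_eta_red = (sup beta eta)\<^sup>*\<^sup>*"

definition I_term :: lterm where "I_term = Abs (Var 0)"

definition Omega :: lterm where
  "Omega = App (Abs (App (Var 0) (Var 0))) (Abs (App (Var 0) (Var 0)))"

text \<open>Church numeral lambda f z. f^n z\<close>
definition church :: "nat \<Rightarrow> lterm" where
  "church n = Abs (Abs ((App (Var 1) ^^ n) (Var 0)))"

text \<open>Church successor lambda n f z. f (n f z)\<close>
definition SUCC :: lterm where
  "SUCC = Abs (Abs (Abs (App (Var 1) (App (App (Var 2) (Var 1)) (Var 0)))))"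

text \<open>Turing's fixed point combinator Theta = A A with A = lambda x y. y (x x y)\<close>
definition Theta :: lterm where
  "Theta = (let A = Abs (Abs (App (Var 0) (App (App (Var 1) (Var 1)) (Var 0)))) in App A A)"

text \<open>Stream constructor: STREAM F =_beta [F 0, STREAM (lambda k. F (succ k))],
  so that for F representing (M_n)_n, STREAM F is the stream [M_n]_n.\<close>
definition STREAM :: lterm where
  "STREAM = App Theta
     (Abs (Abs (Abs
        (App (App (Var 0) (App (Var 1) (church 0)))
             (App (Var 2) (Abs (App (Var 2) (App SUCC (Var 0)))))))))"

definition stream :: "lterm \<Rightarrow> lterm" where
  "stream F = App STREAM F"

definition app_Omegas :: "lterm \<Rightarrow> nat \<Rightarrow> lterm" where
  "app_Omegas M n = ((\<lambda>t. App t Omega) ^^ n) M"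

definition mk_hnf :: "nat \<Rightarrow> nat \<Rightarrow> lterm list \<Rightarrow> lterm" where
  "mk_hnf n v Ms = (Abs ^^ n) (foldl App (Var v) Ms)"

definition has_hnf :: "lterm \<Rightarrow> bool" where
  "has_hnf M = (\<exists>n v Ms. beq M (mk_hnf n v Ms))"

coinductive bt_eq :: "lterm \<Rightarrow> lterm \<Rightarrow> bool" where
  bt_unsolv: "\<not> has_hnf M \<Longrightarrow> \<not> has_hnf N \<Longrightarrow> bt_eq M N"
| bt_hnf: "beq M (mk_hnf n v Ms) \<Longrightarrow> beq N (mk_hnf n v Ns) \<Longrightarrow>
           list_all2 bt_eq Ms Ns \<Longrightarrow> bt_eq M N"

inductive Bomega :: "lterm \<Rightarrow> lterm \<Rightarrow> bool" where
  Bw_B: "bt_eq M N \<Longrightarrow> Bomega M N"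
| Bw_refl: "Bomega M M"
| Bw_sym: "Bomega M N \<Longrightarrow> Bomega N M"
| Bw_trans: "Bomega M N \<Longrightarrow> Bomega N P \<Longrightarrow> Bomega M P"
| Bw_appL: "Bomega M N \<Longrightarrow> Bomega (App M Z) (App N Z)"
| Bw_appR: "Bomega M N \<Longrightarrow> Bomega (App Z M) (App Z N)"
| Bw_abs: "Bomega M N \<Longrightarrow> Bomega (Abs M) (Abs N)"
| Bw_omega: "(\<And>P. closed P \<Longrightarrow> Bomega (App M P) (App N P)) \<Longrightarrow> Bomega M N"

end

theory Submission
  imports Defs
begin

text \<open>By the omega-rule it suffices to show \<open>I\<^sup>\<Omega> P Q = \<eta>\<^sup>\<Omega> P Q\<close> for closed \<open>P\<close>, \<open>Q\<close>.
  Both sides are streams, with entries \<open>P \<Omega>\<^sup>n Q\<close> and \<open>P \<Omega>\<^sup>n (\<eta>\<^sub>n Q)\<close>. An unsolvable \<open>P\<close>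
  has the Boehm tree of \<open>\<Omega>\<close>, for which all entries are unsolvable. A solvable \<open>P\<close> has
  \<open>P \<twoheadrightarrow> \<lambda>x\<^sub>1\<dots>x\<^sub>k. x\<^sub>i M\<^sub>1\<dots>M\<^sub>m\<close>, so \<open>P \<Omega>\<^sup>n\<close> reduces to an \<open>\<Omega>\<close>-headed term once
  \<open>n \<ge> k\<close> and all entries from position \<open>k\<close> on are unsolvable, while the first \<open>k\<close> entries
  agree in \<open>\<B>\<omega>\<close> because \<open>\<eta>\<^sub>n Q = Q\<close> there. Two streams that agree in finitely many
  entries and are unsolvable beyond them are equal in \<open>\<B>\<omega>\<close>: peel off the finite prefix
  and relate the remaining tails by a Boehm-tree bisimulation.\<close>

lemma lift_lift: "i < k + 1 \<Longrightarrow> lift (lift t i) (Suc k) = lift (lift t k) i"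
  by (induct t arbitrary: i k) auto

lemma lift_subst [simp]:
  "j < i + 1 \<Longrightarrow> lift (subst t s j) i = subst (lift t (i + 1)) (lift s i) j"
  by (induct t arbitrary: i j s) (auto simp: diff_Suc lift_lift split: nat.split)

lemma lift_subst_lt:
  "i < j + 1 \<Longrightarrow> lift (subst t s j) i = subst (lift t i) (lift s i) (j + 1)"
  by (induct t arbitrary: i j s) (auto simp: lift_lift)

lemma subst_lift [simp]: "subst (lift t k) s k = t"
  by (induct t arbitrary: k s) simp_all

lemma subst_subst:
  "i < j + 1 \<Longrightarrow> subst (subst t (lift v i) (Suc j)) (subst u v j) i = subst (subst t u i) v j"
  by (induct t arbitrary: i j u v)
    (simp_all add: diff_Suc lift_lift [symmetric] lift_subst_lt split: nat.split)

lemma closedat_mono: "closedat t k \<Longrightarrow> k \<le> j \<Longrightarrow> closedat t j"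
  by (induct t arbitrary: k j) auto

lemma lift_closedat: "closedat t k \<Longrightarrow> k \<le> j \<Longrightarrow> lift t j = t"
  by (induct t arbitrary: k j) auto

lemma subst_closedat: "closedat t k \<Longrightarrow> k \<le> j \<Longrightarrow> subst t s j = t"
  by (induct t arbitrary: k j s) auto

lemma subst_closed: "closed t \<Longrightarrow> subst t s k = t"
  unfolding closed_def by (erule subst_closedat) simp

lemma closedat_lift: "closedat t k \<Longrightarrow> closedat (lift t j) (Suc k)"
  by (induct t arbitrary: k j) auto

lemma closedat_subst:
  "closedat s (Suc k) \<Longrightarrow> closedat t k \<Longrightarrow> j \<le> k \<Longrightarrow> closedat (subst s t j) k"
  by (induct s arbitrary: k j t) (auto simp: closedat_lift)

lemma closedat_Abs_pow [simp]: "closedat ((Abs ^^ n) H) k = closedat H (k + n)"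
  by (induct n arbitrary: k) auto

lemma subst_Abs_pow_closedat:
  "closedat s 0 \<Longrightarrow> subst ((Abs ^^ m) t) s k = (Abs ^^ m) (subst t s (k + m))"
  by (induct m arbitrary: k) (auto simp: lift_closedat)

lemma subst_Abs_pow_Var:
  "subst ((Abs ^^ m) t) (Var j) k = (Abs ^^ m) (subst t (Var (j + m)) (k + m))"
  by (induct m arbitrary: j k) auto

lemma subst_foldl_App:
  "subst (foldl App h Ms) s k = foldl App (subst h s k) (map (\<lambda>t. subst t s k) Ms)"
  by (induct Ms arbitrary: h) auto

lemma subst_mk_hnf_Var: "\<exists>v' Ms'. subst (mk_hnf n v Ms) (Var j) k = mk_hnf n v' Ms'"
proof -
  obtain v' where "subst (Var v) (Var (j + n)) (k + n) = Var v'"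
    by (cases "k + n < v"; cases "v = k + n") auto
  then show ?thesis unfolding mk_hnf_def subst_Abs_pow_Var subst_foldl_App by auto
qed

lemma closedat_Omega [simp]: "closedat Omega k"
  and lift_Omega [simp]: "lift Omega k = Omega"
  and subst_Omega [simp]: "subst Omega s k = Omega"
  by (simp_all add: Omega_def)

lemma app_Omegas_Suc: "app_Omegas M (Suc n) = app_Omegas (App M Omega) n"
  unfolding app_Omegas_def by (simp add: funpow_Suc_right del: funpow.simps)

lemma app_Omegas_Suc': "app_Omegas M (Suc n) = App (app_Omegas M n) Omega"
  by (simp add: app_Omegas_def)

lemma app_Omegas_0 [simp]: "app_Omegas M 0 = M"
  unfolding app_Omegas_def by simp

lemma app_Omegas_add: "app_Omegas M (a + b) = app_Omegas (app_Omegas M a) b"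
  unfolding app_Omegas_def by (simp only: add.commute[of a b] funpow_add comp_apply)

lemma subst_app_Omegas [simp]: "subst (app_Omegas M n) s k = app_Omegas (subst M s k) n"
  by (induct n) (auto simp: app_Omegas_Suc')

section \<open>Beta reduction and the Church--Rosser theorem\<close>

lemma beta_closedat: "beta s t \<Longrightarrow> closedat s k \<Longrightarrow> closedat t k"
  by (induct arbitrary: k rule: beta.induct) (auto simp: closedat_subst)

lemma betas_closedat: "beta\<^sup>*\<^sup>* s t \<Longrightarrow> closedat s k \<Longrightarrow> closedat t k"
  by (induct rule: rtranclp_induct) (auto simp: beta_closedat)

lemma beta_subst: "beta s t \<Longrightarrow> beta (subst s u i) (subst t u i)"
proof (induct arbitrary: u i rule: beta.induct)
  case (beta_redex s t)
  show ?case using beta.beta_redex[of "subst s (lift u 0) (Suc i)" "subst t u i"]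
    by (simp add: subst_subst[symmetric])
qed (auto intro: beta.intros)

lemma betas_appL: "beta\<^sup>*\<^sup>* s t \<Longrightarrow> beta\<^sup>*\<^sup>* (App s u) (App t u)"
  by (induct rule: rtranclp_induct) (auto intro: beta.intros rtranclp.rtrancl_into_rtrancl)

lemma betas_appR: "beta\<^sup>*\<^sup>* s t \<Longrightarrow> beta\<^sup>*\<^sup>* (App u s) (App u t)"
  by (induct rule: rtranclp_induct) (auto intro: beta.intros rtranclp.rtrancl_into_rtrancl)

lemma betas_abs: "beta\<^sup>*\<^sup>* s t \<Longrightarrow> beta\<^sup>*\<^sup>* (Abs s) (Abs t)"
  by (induct rule: rtranclp_induct) (auto intro: beta.intros rtranclp.rtrancl_into_rtrancl)

lemma betas_app_Omegas: "beta\<^sup>*\<^sup>* s t \<Longrightarrow> beta\<^sup>*\<^sup>* (app_Omegas s n) (app_Omegas t n)"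
  by (induct n arbitrary: s t) (auto simp: app_Omegas_Suc intro: betas_appL)

inductive par :: "lterm \<Rightarrow> lterm \<Rightarrow> bool" where
  par_Var: "par (Var n) (Var n)"
| par_Abs: "par s t \<Longrightarrow> par (Abs s) (Abs t)"
| par_App: "par s s' \<Longrightarrow> par t t' \<Longrightarrow> par (App s t) (App s' t')"
| par_beta: "par s s' \<Longrightarrow> par t t' \<Longrightarrow> par (App (Abs s) t) (subst s' t' 0)"

inductive_cases parE: "par (Var n) t" "par (Abs s) t" "par (App s u) t"

lemma par_refl [simp]: "par t t"
  by (induct t) (auto intro: par.intros)

lemma beta_par: "beta s t \<Longrightarrow> par s t"
  by (induct rule: beta.induct) (auto intro: par.intros)

lemma par_betas: "par s t \<Longrightarrow> beta\<^sup>*\<^sup>* s t"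
proof (induct rule: par.induct)
  case (par_App s s' t t')
  then show ?case by (meson betas_appL betas_appR rtranclp_trans)
next
  case (par_beta s s' t t')
  have "beta\<^sup>*\<^sup>* (App (Abs s) t) (App (Abs s') t')"
    by (meson betas_appL betas_appR betas_abs rtranclp_trans par_beta)
  then show ?case by (meson beta.beta_redex rtranclp.rtrancl_into_rtrancl)
qed (auto intro: betas_abs)

lemma par_lift: "par s t \<Longrightarrow> par (lift s k) (lift t k)"
proof (induct arbitrary: k rule: par.induct)
  case (par_beta s s' t t')
  show ?case using par.par_beta[OF par_beta(2)[of "Suc k"] par_beta(4)[of k]] by simp
qed (auto intro: par.intros)

lemma par_subst: "par s s' \<Longrightarrow> par t t' \<Longrightarrow> par (subst s t k) (subst s' t' k)"
proof (induct arbitrary: t t' k rule: par.induct)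
  case (par_Abs s s')
  have "par (subst s (lift t 0) (Suc k)) (subst s' (lift t' 0) (Suc k))"
    using par_Abs(2) par_lift[OF par_Abs(3)] by blast
  then show ?case by (simp add: par.par_Abs)
next
  case (par_beta s s' u u')
  have "par (App (Abs (subst s (lift t 0) (Suc k))) (subst u t k))
            (subst (subst s' (lift t' 0) (Suc k)) (subst u' t' k) 0)"
    by (rule par.par_beta) (auto intro: par_beta par_lift)
  then show ?case by (simp add: subst_subst[symmetric])
qed (auto intro!: par.intros)

fun cd :: "lterm \<Rightarrow> lterm" where
  "cd (Var n) = Var n"
| "cd (Abs s) = Abs (cd s)"
| "cd (App (Abs s) t) = subst (cd s) (cd t) 0"
| "cd (App (Var n) t) = App (Var n) (cd t)"
| "cd (App (App s u) t) = App (cd (App s u)) (cd t)"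

text \<open>The complete development \<open>cd s\<close> closes every parallel step from \<open>s\<close> (Takahashi);
  the diamond property of \<open>par\<close> follows.\<close>

lemma par_cd: "par s t \<Longrightarrow> par t (cd s)"
proof (induct s arbitrary: t rule: cd.induct)
  case (3 s u)
  from 3(3) have "(\<exists>s' u'. t = App (Abs s') u' \<and> par s s' \<and> par u u') \<or>
     (\<exists>s' u'. t = subst s' u' 0 \<and> par s s' \<and> par u u')"
    by (auto elim!: parE)
  then show ?case using 3(1,2) by (auto intro: par_subst par.par_beta)
next
  case (5 s u v)
  from 5(3) show ?case by (cases rule: parE(3)) (auto intro: par.intros 5)
qed (auto elim!: parE intro: par.intros)

lemma pars_strip: "par\<^sup>*\<^sup>* s u \<Longrightarrow> par s t \<Longrightarrow> \<exists>w. par\<^sup>*\<^sup>* t w \<and> par u w"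
proof (induct arbitrary: t rule: rtranclp_induct)
  case (step y z)
  then obtain w where "par\<^sup>*\<^sup>* t w" "par y w" by blast
  then show ?case using step par_cd by (meson rtranclp.rtrancl_into_rtrancl)
qed blast

lemma pars_confluent: "par\<^sup>*\<^sup>* s t \<Longrightarrow> par\<^sup>*\<^sup>* s u \<Longrightarrow> \<exists>w. par\<^sup>*\<^sup>* t w \<and> par\<^sup>*\<^sup>* u w"
proof (induct arbitrary: u rule: rtranclp_induct)
  case (step y z)
  then obtain w where "par\<^sup>*\<^sup>* y w" "par\<^sup>*\<^sup>* u w" by blast
  from pars_strip[OF this(1) step(2)] obtain w' where "par\<^sup>*\<^sup>* z w'" "par w w'" by blast
  then show ?case using \<open>par\<^sup>*\<^sup>* u w\<close> by (meson rtranclp.rtrancl_into_rtrancl)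
qed blast

lemma pars_eq_betas: "par\<^sup>*\<^sup>* = beta\<^sup>*\<^sup>*"
proof (intro ext iffI)
  show "par\<^sup>*\<^sup>* s t \<Longrightarrow> beta\<^sup>*\<^sup>* s t" for s t
    by (induct rule: rtranclp_induct) (auto dest: par_betas)
  show "beta\<^sup>*\<^sup>* s t \<Longrightarrow> par\<^sup>*\<^sup>* s t" for s t
    by (induct rule: rtranclp_induct) (auto dest: beta_par intro: rtranclp.rtrancl_into_rtrancl)
qed

lemma betas_confluent: "beta\<^sup>*\<^sup>* s t \<Longrightarrow> beta\<^sup>*\<^sup>* s u \<Longrightarrow> \<exists>w. beta\<^sup>*\<^sup>* t w \<and> beta\<^sup>*\<^sup>* u w"
  using pars_confluent unfolding pars_eq_betas .

lemma beq_refl [simp]: "beq x x"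
  by (simp add: beq_def)

lemma beq_sym: "beq x y \<Longrightarrow> beq y x"
  unfolding beq_def by (rule equivclp_sym)

lemma beq_trans: "beq x y \<Longrightarrow> beq y z \<Longrightarrow> beq x z"
  unfolding beq_def by (meson equivclp_trans)

lemma betas_beq: "beta\<^sup>*\<^sup>* x y \<Longrightarrow> beq x y"
  unfolding beq_def by (rule predicate2D[OF rtranlcp_le_equivclp])

lemma beta_beq: "beta x y \<Longrightarrow> beq x y"
  by (simp add: betas_beq r_into_rtranclp)

lemma beq_common_reduct: "beq s t \<Longrightarrow> \<exists>w. beta\<^sup>*\<^sup>* s w \<and> beta\<^sup>*\<^sup>* t w"
  unfolding beq_def
proof (induct rule: equivclp_induct)
  case (step y z)
  then obtain w where w: "beta\<^sup>*\<^sup>* s w" "beta\<^sup>*\<^sup>* y w" by blast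
  from step(2) show ?case
  proof
    assume "beta y z"
    then obtain w' where "beta\<^sup>*\<^sup>* w w'" "beta\<^sup>*\<^sup>* z w'" using betas_confluent[OF w(2)] by blast
    then show ?thesis using w by (meson rtranclp_trans)
  next
    assume "beta z y"
    then show ?thesis using w by (meson converse_rtranclp_into_rtranclp)
  qed
qed blast

lemma beq_map:
  assumes "\<And>a b. beta a b \<Longrightarrow> beta (f a) (f b)" and "beq x y"
  shows "beq (f x) (f y)"
  using assms(2) unfolding beq_def
proof (induct rule: equivclp_induct)
  case (step y z)
  from step(2) have "beta (f y) (f z) \<or> beta (f z) (f y)"
    using assms(1) by blast
  then show ?case using step(3) by (rule equivclp_into_equivclp[rotated])
qed simp

lemma beq_appR: "beq s t \<Longrightarrow> beq (App u s) (App u t)"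
  using beq_map[of "\<lambda>x. App u x"] beta_appR by blast

lemma beq_subst: "beq s t \<Longrightarrow> beq (subst s u i) (subst t u i)"
  using beq_map[of "\<lambda>x. subst x u i"] beta_subst by blast

section \<open>Solvable and unsolvable terms\<close>

inductive head_var :: "nat \<Rightarrow> lterm \<Rightarrow> bool" where
  "head_var v (Var v)"
| "head_var v M \<Longrightarrow> head_var v (App M N)"

inductive Omega_headed :: "lterm \<Rightarrow> bool" where
  "Omega_headed Omega"
| "Omega_headed M \<Longrightarrow> Omega_headed (App M N)"

lemma head_var_foldl_App: "head_var v M \<Longrightarrow> head_var v (foldl App M Ms)"
  by (induct Ms arbitrary: M) (auto intro: head_var.intros)

lemma head_var_beta: "beta M N \<Longrightarrow> head_var v M \<Longrightarrow> head_var v N"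
  by (induct rule: beta.induct) (auto elim: head_var.cases intro: head_var.intros)

lemma head_var_betas: "beta\<^sup>*\<^sup>* M N \<Longrightarrow> head_var v M \<Longrightarrow> head_var v N"
  by (induct rule: rtranclp_induct) (auto intro: head_var_beta)

lemma head_var_closedat: "head_var v H \<Longrightarrow> closedat H k \<Longrightarrow> v < k"
  by (induct rule: head_var.induct) auto

lemma betas_Abs_pow:
  assumes "beta\<^sup>*\<^sup>* ((Abs ^^ n) H) L"
  shows "\<exists>H'. L = (Abs ^^ n) H' \<and> beta\<^sup>*\<^sup>* H H'"
  using assms
proof (induct rule: rtranclp_induct)
  case (step y z)
  then obtain H' where "y = (Abs ^^ n) H'" "beta\<^sup>*\<^sup>* H H'" by blast
  moreover have "beta ((Abs ^^ n) H') L \<Longrightarrow> \<exists>H''. L = (Abs ^^ n) H'' \<and> beta H' H''" for L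
    by (induct n arbitrary: L) (auto elim: beta.cases)
  ultimately show ?case using step(2) by (meson rtranclp.rtrancl_into_rtrancl)
qed blast

lemma betas_mk_hnf: "beta\<^sup>*\<^sup>* (mk_hnf n v Ms) L \<Longrightarrow> \<exists>H. L = (Abs ^^ n) H \<and> head_var v H"
  unfolding mk_hnf_def using betas_Abs_pow head_var_betas head_var_foldl_App head_var.intros(1)
  by blast

lemma has_hnf_beq: "beq M N \<Longrightarrow> has_hnf M \<Longrightarrow> has_hnf N"
  unfolding has_hnf_def using beq_sym beq_trans by blast

lemma closed_has_hnf_betas:
  assumes "closed P" "has_hnf P"
  obtains k v H where "beta\<^sup>*\<^sup>* P ((Abs ^^ k) H)" "head_var v H" "v < k"
proof -
  obtain n v Ms where "beq P (mk_hnf n v Ms)"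
    using assms(2) unfolding has_hnf_def by blast
  then obtain w where w: "beta\<^sup>*\<^sup>* P w" "beta\<^sup>*\<^sup>* (mk_hnf n v Ms) w"
    using beq_common_reduct by blast
  then obtain H where H: "w = (Abs ^^ n) H" "head_var v H"
    using betas_mk_hnf by blast
  have "closedat w 0" using betas_closedat[OF w(1)] assms(1) unfolding closed_def by blast
  then have "v < n" using H head_var_closedat by auto
  then show ?thesis using that w H by blast
qed

lemma Omega_headed_AppD: "Omega_headed (App M N) \<Longrightarrow> App M N = Omega \<or> Omega_headed M"
  by (cases rule: Omega_headed.cases) auto

lemma not_Omega_headed_Abs: "\<not> Omega_headed (Abs M)"
  by (auto elim: Omega_headed.cases simp: Omega_def)

lemma Omega_body_beta_normal: "\<not> beta (Abs (App (Var 0) (Var 0))) t"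
  by (auto elim!: beta.cases)

lemma Omega_headed_beta: "beta M N \<Longrightarrow> Omega_headed M \<Longrightarrow> Omega_headed N"
proof (induct rule: beta.induct)
  case (beta_redex s t)
  have "App (Abs s) t = Omega"
    using Omega_headed_AppD[OF beta_redex] not_Omega_headed_Abs by blast
  then have "subst s t 0 = Omega" by (auto simp: Omega_def)
  then show ?case by (simp add: Omega_headed.intros(1))
next
  case (beta_appL s t u)
  from Omega_headed_AppD[OF beta_appL(3)] show ?case
  proof
    assume "App s u = Omega"
    then show ?thesis using beta_appL(1) Omega_body_beta_normal by (simp add: Omega_def)
  qed (auto intro: Omega_headed.intros beta_appL(2))
next
  case (beta_appR s t u)
  from Omega_headed_AppD[OF beta_appR(3)] show ?case
  proof
    assume "App u s = Omega"
    then show ?thesis using beta_appR(1) Omega_body_beta_normal by (simp add: Omega_def)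
  qed (auto intro: Omega_headed.intros)
qed (simp add: not_Omega_headed_Abs)

lemma Omega_headed_betas: "beta\<^sup>*\<^sup>* M N \<Longrightarrow> Omega_headed M \<Longrightarrow> Omega_headed N"
  by (induct rule: rtranclp_induct) (auto intro: Omega_headed_beta)

lemma Omega_headed_not_head_var: "head_var v M \<Longrightarrow> \<not> Omega_headed M"
proof (induct rule: head_var.induct)
  case (2 v M N)
  show ?case
  proof
    assume "Omega_headed (App M N)"
    then have "App M N = Omega" using 2(2) Omega_headed_AppD by blast
    then have "M = Abs (App (Var 0) (Var 0))" by (simp add: Omega_def)
    then show False using 2(1) by (auto elim: head_var.cases)
  qed
qed (auto elim: Omega_headed.cases simp: Omega_def)

lemma Omega_headed_not_Abs_pow_head_var:
  assumes "Omega_headed ((Abs ^^ n) H)" "head_var v H"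
  shows False
proof (cases n)
  case 0
  then show ?thesis using assms Omega_headed_not_head_var by simp
next
  case (Suc m)
  then show ?thesis using assms(1) not_Omega_headed_Abs by simp
qed

lemma Omega_headed_unsolvable:
  assumes "beta\<^sup>*\<^sup>* M W" "Omega_headed W"
  shows "\<not> has_hnf M"
proof
  assume "has_hnf M"
  then obtain n v Ms where "beq M (mk_hnf n v Ms)" unfolding has_hnf_def by blast
  then have "beq W (mk_hnf n v Ms)" using assms(1) by (meson beq_sym beq_trans betas_beq)
  then obtain w where w: "beta\<^sup>*\<^sup>* W w" "beta\<^sup>*\<^sup>* (mk_hnf n v Ms) w"
    using beq_common_reduct by blast
  then obtain H where "w = (Abs ^^ n) H" "head_var v H" using betas_mk_hnf by blast
  moreover have "Omega_headed w" using Omega_headed_betas w(1) assms(2) by blast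
  ultimately show False using Omega_headed_not_Abs_pow_head_var by blast
qed

lemma Omega_unsolvable: "\<not> has_hnf Omega"
  using Omega_headed_unsolvable Omega_headed.intros(1) by blast

lemma Omega_headed_app_Omegas: "Omega_headed M \<Longrightarrow> Omega_headed (app_Omegas M n)"
  by (induct n arbitrary: M) (auto simp: app_Omegas_Suc intro: Omega_headed.intros)

lemma unsolvable_lift: "\<not> has_hnf M \<Longrightarrow> \<not> has_hnf (lift M 0)"
proof
  assume "\<not> has_hnf M" "has_hnf (lift M 0)"
  then obtain n v Ms where "beq (lift M 0) (mk_hnf n v Ms)" unfolding has_hnf_def by blast
  then have "beq M (subst (mk_hnf n v Ms) (Var 0) 0)"
    using beq_subst[of _ _ "Var 0" 0] by fastforce
  then show False using subst_mk_hnf_Var \<open>\<not> has_hnf M\<close> unfolding has_hnf_def by metis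
qed

definition unsolvable_after_Omegas :: "nat \<Rightarrow> lterm \<Rightarrow> bool" where
  "unsolvable_after_Omegas k P \<longleftrightarrow> (\<forall>n\<ge>k. \<forall>Z. \<not> has_hnf (App (app_Omegas P n) Z))"

lemma unsolvable_after_Omegas_Omega: "unsolvable_after_Omegas 0 Omega"
  unfolding unsolvable_after_Omegas_def
  using Omega_headed_unsolvable[OF rtranclp.rtrancl_refl]
  by (blast intro: Omega_headed.intros Omega_headed_app_Omegas)

text \<open>\<open>k\<close> applications of \<open>\<Omega>\<close> to \<open>\<lambda>x\<^sub>1\<dots>x\<^sub>k. H\<close> substitute \<open>\<Omega>\<close> for every bound
  variable, so this predicate on the body \<open>H\<close> is what makes the result \<open>\<Omega>\<close>-headed.\<close>

inductive Omega_or_lt_headed :: "nat \<Rightarrow> lterm \<Rightarrow> bool" where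
  "Omega_or_lt_headed k Omega"
| "v < k \<Longrightarrow> Omega_or_lt_headed k (Var v)"
| "Omega_or_lt_headed k M \<Longrightarrow> Omega_or_lt_headed k (App M N)"

lemma head_var_Omega_or_lt_headed: "head_var v H \<Longrightarrow> v < k \<Longrightarrow> Omega_or_lt_headed k H"
  by (induct rule: head_var.induct) (auto intro: Omega_or_lt_headed.intros)

lemma Omega_or_lt_headed_subst:
  "Omega_or_lt_headed (Suc k) H \<Longrightarrow> Omega_or_lt_headed k (subst H Omega k)"
  by (induct "Suc k" H rule: Omega_or_lt_headed.induct) (auto intro: Omega_or_lt_headed.intros)

lemma Omega_or_lt_headed_0: "Omega_or_lt_headed 0 H \<Longrightarrow> Omega_headed H"
  by (induct "0::nat" H rule: Omega_or_lt_headed.induct) (auto intro: Omega_headed.intros)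

lemma Omega_or_lt_headed_app_Omegas:
  "Omega_or_lt_headed k H \<Longrightarrow> \<exists>W. beta\<^sup>*\<^sup>* (app_Omegas ((Abs ^^ k) H) k) W \<and> Omega_headed W"
proof (induct k arbitrary: H)
  case 0
  then show ?case using Omega_or_lt_headed_0 by auto
next
  case (Suc k)
  have "beta (App ((Abs ^^ Suc k) H) Omega) ((Abs ^^ k) (subst H Omega k))"
    using beta_redex[of "(Abs ^^ k) H" Omega] by (simp add: subst_Abs_pow_closedat)
  then have "beta\<^sup>*\<^sup>* (app_Omegas ((Abs ^^ Suc k) H) (Suc k))
                     (app_Omegas ((Abs ^^ k) (subst H Omega k)) k)"
    unfolding app_Omegas_Suc by (intro betas_app_Omegas r_into_rtranclp)
  moreover obtain W where "beta\<^sup>*\<^sup>* (app_Omegas ((Abs ^^ k) (subst H Omega k)) k) W"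
      "Omega_headed W"
    using Suc Omega_or_lt_headed_subst by blast
  ultimately show ?case by (meson rtranclp_trans)
qed

lemma closed_solvable_unsolvable_after_Omegas:
  assumes "closed P" "has_hnf P"
  obtains k where "unsolvable_after_Omegas k P"
proof -
  obtain k v H where H: "beta\<^sup>*\<^sup>* P ((Abs ^^ k) H)" "head_var v H" "v < k"
    using closed_has_hnf_betas assms by blast
  obtain W where W: "beta\<^sup>*\<^sup>* (app_Omegas ((Abs ^^ k) H) k) W" "Omega_headed W"
    using Omega_or_lt_headed_app_Omegas head_var_Omega_or_lt_headed H by blast
  have "\<not> has_hnf (App (app_Omegas P (k + d)) Z)" for d Z
  proof -
    have "beta\<^sup>*\<^sup>* (app_Omegas P k) W"
      using betas_app_Omegas[OF H(1)] W(1) by (meson rtranclp_trans)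
    then have "beta\<^sup>*\<^sup>* (App (app_Omegas P (k + d)) Z) (App (app_Omegas W d) Z)"
      unfolding app_Omegas_add by (intro betas_appL betas_app_Omegas)
    moreover have "Omega_headed (App (app_Omegas W d) Z)"
      using W(2) by (auto intro: Omega_headed.intros Omega_headed_app_Omegas)
    ultimately show ?thesis using Omega_headed_unsolvable by blast
  qed
  then have "unsolvable_after_Omegas k P"
    unfolding unsolvable_after_Omegas_def by (metis le_Suc_ex)
  then show ?thesis by (rule that)
qed

lemma beq_bt_eq: "beq M N \<Longrightarrow> bt_eq M N"
proof (coinduction arbitrary: M N rule: bt_eq.coinduct)
  case (bt_eq M N)
  show ?case
  proof (cases "has_hnf M")
    case True
    then obtain n v Ms where h: "beq M (mk_hnf n v Ms)" unfolding has_hnf_def by blast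
    then have "beq N (mk_hnf n v Ms)" using bt_eq beq_sym beq_trans by blast
    moreover have "list_all2 (\<lambda>x y. (\<exists>M N. x = M \<and> y = N \<and> beq M N) \<or> bt_eq x y) Ms Ms"
      by (rule list_all2_refl) simp
    ultimately show ?thesis using h by blast
  next
    case False
    then show ?thesis using bt_eq has_hnf_beq beq_sym by blast
  qed
qed

lemma beq_Bomega: "beq M N \<Longrightarrow> Bomega M N"
  by (simp add: Bw_B beq_bt_eq)

lemma beta_Bomega: "beta s t \<Longrightarrow> Bomega s t"
  by (simp add: beq_Bomega beta_beq)

lemma eta_Bomega: "eta s t \<Longrightarrow> Bomega s t"
proof (induct rule: eta.induct)
  case (eta_redex s)
  show ?case
  proof (rule Bw_omega)
    fix P
    have "beta (App (Abs (App (lift s 0) (Var 0))) P) (App s P)"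
      using beta_redex[of "App (lift s 0) (Var 0)" P] by simp
    then show "Bomega (App (Abs (App (lift s 0) (Var 0))) P) (App s P)"
      by (rule beta_Bomega)
  qed
qed (auto intro: Bomega.intros)

lemma beta_eta_red_Bomega: "beta_eta_red s t \<Longrightarrow> Bomega s t"
  unfolding beta_eta_red_def
  by (induct rule: rtranclp_induct) (auto intro: Bomega.intros beta_Bomega eta_Bomega)

lemma Bomega_app_beta_eta_red_I: "beta_eta_red E I_term \<Longrightarrow> Bomega (App E Q) Q"
  using Bw_appL[OF beta_eta_red_Bomega] beta_Bomega[OF beta_redex[of "Var 0" Q]]
  by (simp add: I_term_def) (meson Bw_trans)

lemma Bomega_beq_cong: "beq M M' \<Longrightarrow> beq N N' \<Longrightarrow> Bomega M' N' \<Longrightarrow> Bomega M N"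
  by (meson Bw_sym Bw_trans beq_Bomega)

text \<open>An unsolvable argument may be replaced by \<open>\<Omega>\<close>, which has the same Boehm tree.\<close>

lemma Bomega_omega_unsolvable_after_Omegas:
  assumes "\<And>P k. closed P \<Longrightarrow> unsolvable_after_Omegas k P \<Longrightarrow> Bomega (App M P) (App N P)"
  shows "Bomega M N"
proof (rule Bw_omega)
  fix P assume P: "closed P"
  show "Bomega (App M P) (App N P)"
  proof (cases "has_hnf P")
    case True
    then show ?thesis using P assms closed_solvable_unsolvable_after_Omegas by blast
  next
    case False
    have "Bomega P Omega" using Bw_B[OF bt_unsolv[OF False Omega_unsolvable]] .
    moreover have "Bomega (App M Omega) (App N Omega)"
      using assms unsolvable_after_Omegas_Omega by (simp add: closed_def)
    ultimately show ?thesis by (meson Bw_appR Bw_sym Bw_trans)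
  qed
qed

section \<open>Church numerals and streams\<close>

lemma closedat_church [simp]: "closedat (church n) k"
proof -
  have "closedat ((App (Var 1) ^^ n) (Var 0)) 2" by (induct n) auto
  then show ?thesis unfolding church_def using closedat_mono[of _ 2 "k + 2"] by simp
qed

lemma lift_church [simp]: "lift (church n) k = church n"
  and subst_church [simp]: "subst (church n) s k = church n"
  using lift_closedat subst_closedat closedat_church[of n 0] by blast+

lemma closedat_SUCC [simp]: "closedat SUCC k"
  by (simp add: SUCC_def)

lemma lift_SUCC [simp]: "lift SUCC k = SUCC"
  and subst_SUCC [simp]: "subst SUCC s k = SUCC"
  using lift_closedat subst_closedat closedat_SUCC[of 0] by blast+

lemma SUCC_church: "beq (App SUCC (church n)) (church (Suc n))"
proof -
  have body1: "subst ((App (Var (Suc 0)) ^^ n) (Var 0)) (Var j) (Suc 0) = (App (Var j) ^^ n) (Var 0)"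
    for j
    by (induct n) auto
  have body2: "subst ((App (Var (Suc j)) ^^ n) (Var 0)) (Var 0) 0 = (App (Var j) ^^ n) (Var 0)"
    for j by (induct n) auto
  have s1: "beta (App SUCC (church n))
     (Abs (Abs (App (Var 1) (App (App (church n) (Var 1)) (Var 0)))))"
    using beta_redex[of "Abs (Abs (App (Var 1) (App (App (Var 2) (Var 1)) (Var 0))))" "church n"]
    by (simp add: SUCC_def)
  have s2: "beta (App (church n) (Var 1)) (Abs ((App (Var 2) ^^ n) (Var 0)))"
    using beta_redex[of "Abs ((App (Var 1) ^^ n) (Var 0))" "Var 1"]
    by (simp add: church_def body1 One_nat_def numeral_2_eq_2)
  have s3: "beta (App (Abs ((App (Var 2) ^^ n) (Var 0))) (Var 0)) ((App (Var 1) ^^ n) (Var 0))"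
    using beta_redex[of "(App (Var 2) ^^ n) (Var 0)" "Var 0"]
    by (simp add: body2 One_nat_def numeral_2_eq_2)
  have "beta\<^sup>*\<^sup>* (App (App (church n) (Var 1)) (Var 0)) ((App (Var 1) ^^ n) (Var 0))"
    using s2 s3 by (meson beta_appL r_into_rtranclp rtranclp.rtrancl_into_rtrancl)
  then have "beta\<^sup>*\<^sup>* (Abs (Abs (App (Var 1) (App (App (church n) (Var 1)) (Var 0)))))
     (church (Suc n))"
    unfolding church_def by (simp add: betas_abs betas_appR)
  then show ?thesis using s1 by (meson betas_beq converse_rtranclp_into_rtranclp)
qed

definition Turing_half :: lterm where
  "Turing_half = Abs (Abs (App (Var 0) (App (App (Var 1) (Var 1)) (Var 0))))"

definition stream_step :: lterm where
  "stream_step = Abs (Abs (Abs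
     (App (App (Var 0) (App (Var 1) (church 0)))
          (App (Var 2) (Abs (App (Var 2) (App SUCC (Var 0))))))))"

definition PAIR :: lterm where
  "PAIR = Abs (Abs (Abs (App (App (Var 0) (Var 2)) (Var 1))))"

text \<open>\<open>shift G\<close> represents \<open>\<lambda>k. G (k + 1)\<close>, the index function of the tail of \<open>stream G\<close>.\<close>

definition shift :: "lterm \<Rightarrow> lterm" where
  "shift G = Abs (App (lift G 0) (App SUCC (Var 0)))"

lemma STREAM_eq: "STREAM = App (App Turing_half Turing_half) stream_step"
  by (simp add: STREAM_def Theta_def Turing_half_def stream_step_def Let_def)

lemma closedat_STREAM [simp]: "closedat STREAM k"
  by (simp add: STREAM_eq Turing_half_def stream_step_def SUCC_def)

lemma lift_STREAM [simp]: "lift STREAM k = STREAM"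
  and subst_STREAM [simp]: "subst STREAM s k = STREAM"
  using lift_closedat subst_closedat closedat_STREAM[of 0] by blast+

lemma subst_stream [simp]: "subst (stream F) s k = stream (subst F s k)"
  by (simp add: stream_def)

lemma STREAM_unfold: "beta\<^sup>*\<^sup>* STREAM (App stream_step STREAM)"
proof -
  have "beta (App (App Turing_half Turing_half) stream_step)
     (App (Abs (App (Var 0) (App (App Turing_half Turing_half) (Var 0)))) stream_step)"
    using beta_redex[of "Abs (App (Var 0) (App (App (Var 1) (Var 1)) (Var 0)))" Turing_half]
    by (simp add: Turing_half_def beta_appL)
  moreover have "beta (App (Abs (App (Var 0) (App (App Turing_half Turing_half) (Var 0))))
      stream_step) (App stream_step STREAM)"
    using beta_redex[of "App (Var 0) (App (App Turing_half Turing_half) (Var 0))" stream_step]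
    by (simp add: Turing_half_def STREAM_eq)
  ultimately show ?thesis
    unfolding STREAM_eq by (meson r_into_rtranclp rtranclp.rtrancl_into_rtrancl)
qed

lemma stream_hnf:
  "beq (stream G) (mk_hnf 1 0 [lift (App G (church 0)) 0, lift (stream (shift G)) 0])"
proof -
  have "beq (stream G) (App (App stream_step STREAM) G)"
    unfolding stream_def using STREAM_unfold by (simp add: betas_appL betas_beq)
  moreover have "beta (App stream_step STREAM)
      (Abs (Abs (App (App (Var 0) (App (Var 1) (church 0)))
             (App STREAM (Abs (App (Var 2) (App SUCC (Var 0))))))))"
    using beta_redex[of "Abs (Abs (App (App (Var 0) (App (Var 1) (church 0)))
             (App (Var 2) (Abs (App (Var 2) (App SUCC (Var 0)))))))" STREAM]
    by (simp add: stream_step_def)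
  moreover have "beta (App (Abs (Abs (App (App (Var 0) (App (Var 1) (church 0)))
             (App STREAM (Abs (App (Var 2) (App SUCC (Var 0)))))))) G)
     (Abs (App (App (Var 0) (App (lift G 0) (church 0)))
        (App STREAM (Abs (App (lift (lift G 0) 0) (App SUCC (Var 0)))))))"
    using beta_redex[of "Abs (App (App (Var 0) (App (Var 1) (church 0)))
             (App STREAM (Abs (App (Var 2) (App SUCC (Var 0))))))" G]
    by simp
  ultimately show ?thesis
    by (simp add: mk_hnf_def stream_def shift_def lift_lift) (meson beq_trans beta_beq beta_appL)
qed

lemma PAIR_hnf: "beq (App (App PAIR X) Y) (Abs (App (App (Var 0) (lift X 0)) (lift Y 0)))"
proof -
  have "beta (App PAIR X) (Abs (Abs (App (App (Var 0) (lift (lift X 0) 0)) (Var 1))))"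
    using beta_redex[of "Abs (Abs (App (App (Var 0) (Var 2)) (Var 1)))" X]
    by (simp add: PAIR_def numeral_2_eq_2)
  moreover have "beta (App (Abs (Abs (App (App (Var 0) (lift (lift X 0) 0)) (Var 1)))) Y)
     (Abs (App (App (Var 0) (lift X 0)) (lift Y 0)))"
    using beta_redex[of "Abs (App (App (Var 0) (lift (lift X 0) 0)) (Var 1))" Y]
    by (simp add: lift_lift[of 0 0, symmetric, simplified])
  ultimately show ?thesis by (meson beq_trans beta_beq beta_appL)
qed

lemma stream_eq_PAIR: "beq (stream G) (App (App PAIR (App G (church 0))) (stream (shift G)))"
  using stream_hnf[of G] PAIR_hnf[of "App G (church 0)" "stream (shift G)"]
  by (simp add: mk_hnf_def) (meson beq_sym beq_trans)

lemma shift_church: "beq (App (shift G) (church n)) (App G (church (Suc n)))"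
proof -
  have "beta (App (shift G) (church n)) (App G (App SUCC (church n)))"
    using beta_redex[of "App (lift G 0) (App SUCC (Var 0))" "church n"] by (simp add: shift_def)
  then show ?thesis using SUCC_church beq_appR beq_trans beta_beq by blast
qed

section \<open>Streams in \<open>\<B>\<omega>\<close>\<close>

definition unsolvable_entries :: "lterm \<Rightarrow> bool" where
  "unsolvable_entries G \<longleftrightarrow> (\<forall>n. \<not> has_hnf (App G (church n)))"

lemma unsolvable_entries_lift_shift:
  "unsolvable_entries G \<Longrightarrow> unsolvable_entries (lift (shift G) 0)"
  unfolding unsolvable_entries_def
  using shift_church has_hnf_beq unsolvable_lift by (metis lift.simps(2) lift_church)

text \<open>The bisimulation relates \<open>stream G\<close> and \<open>stream H\<close>: both are \<open>\<lambda>z. z M N\<close> with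
  unsolvable heads \<open>M\<close> and tails \<open>N\<close> that are again such streams.\<close>

lemma bt_eq_stream_unsolvable_entries:
  "unsolvable_entries G \<Longrightarrow> unsolvable_entries H \<Longrightarrow> bt_eq (stream G) (stream H)"
proof (coinduction arbitrary: G H rule: bt_eq.coinduct)
  case (bt_eq G H)
  have heads: "bt_eq (lift (App G (church 0)) 0) (lift (App H (church 0)) 0)"
    using bt_eq unfolding unsolvable_entries_def by (intro bt_unsolv unsolvable_lift) auto
  have "lift (stream (shift G)) 0 = stream (lift (shift G) 0)"
       "lift (stream (shift H)) 0 = stream (lift (shift H) 0)"
    by (simp_all add: stream_def)
  then have tails: "\<exists>G' H'. lift (stream (shift G)) 0 = stream G'
      \<and> lift (stream (shift H)) 0 = stream H' \<and> unsolvable_entries G' \<and> unsolvable_entries H'"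
    using unsolvable_entries_lift_shift bt_eq by metis
  show ?case using stream_hnf[of G] stream_hnf[of H] heads tails by fastforce
qed

lemma Bomega_stream:
  assumes "\<And>n. k \<le> n \<Longrightarrow> \<not> has_hnf (App G (church n)) \<and> \<not> has_hnf (App H (church n))"
    and "\<And>n. n < k \<Longrightarrow> Bomega (App G (church n)) (App H (church n))"
  shows "Bomega (stream G) (stream H)"
  using assms
proof (induct k arbitrary: G H)
  case 0
  then show ?case
    by (intro Bw_B bt_eq_stream_unsolvable_entries) (auto simp: unsolvable_entries_def)
next
  case (Suc k)
  have "Bomega (stream (shift G)) (stream (shift H))"
  proof (rule Suc.hyps)
    show "\<not> has_hnf (App (shift G) (church n)) \<and> \<not> has_hnf (App (shift H) (church n))"
      if "k \<le> n" for n
      using that Suc.prems(1)[of "Suc n"] shift_church has_hnf_beq by blast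
    show "Bomega (App (shift G) (church n)) (App (shift H) (church n))" if "n < k" for n
      using that Suc.prems(2)[of "Suc n"] shift_church Bomega_beq_cong by blast
  qed
  moreover have "Bomega (App G (church 0)) (App H (church 0))" using Suc.prems(2) by simp
  ultimately show ?case
    using stream_eq_PAIR Bomega_beq_cong by (meson Bw_appL Bw_appR Bw_trans)
qed

lemma Bomega_stream_app_Omegas:
  assumes "unsolvable_after_Omegas k P"
    and "\<And>n. Bomega (X n) (Y n)"
    and "\<And>n. beq (App G (church n)) (App (app_Omegas P n) (X n))"
    and "\<And>n. beq (App H (church n)) (App (app_Omegas P n) (Y n))"
  shows "Bomega (stream G) (stream H)"
proof (rule Bomega_stream)
  show "\<not> has_hnf (App G (church n)) \<and> \<not> has_hnf (App H (church n))" if "k \<le> n" for n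
    using assms(1,3,4) that has_hnf_beq unfolding unsolvable_after_Omegas_def by blast
  show "Bomega (App G (church n)) (App H (church n))" for n
    using assms(2-4) Bw_appR Bomega_beq_cong by blast
qed

text \<open>The free variables \<open>Var 0\<close>, \<open>Var 1\<close> of the stream equations stand for the two
  arguments, which the omega-rule instantiates with closed terms.\<close>

lemma Bomega_app_via_streams:
  assumes "closed M" "closed N" "closed P"
    and M: "beq (App (App M (Var 0)) (Var 1)) (stream F)"
    and N: "beq (App (App N (Var 0)) (Var 1)) (stream F')"
    and streams: "\<And>Q. closed Q \<Longrightarrow>
      Bomega (stream (subst (subst F P 0) Q 0)) (stream (subst (subst F' P 0) Q 0))"
  shows "Bomega (App M P) (App N P)"
proof (rule Bw_omega)
  fix Q assume "closed Q"
  have "beq (App (App M P) Q) (stream (subst (subst F P 0) Q 0))"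
    using beq_subst[OF beq_subst[OF M, of P 0], of Q 0] by (simp add: subst_closed assms)
  moreover have "beq (App (App N P) Q) (stream (subst (subst F' P 0) Q 0))"
    using beq_subst[OF beq_subst[OF N, of P 0], of Q 0] by (simp add: subst_closed assms)
  ultimately show "Bomega (App (App M P) Q) (App (App N P) Q)"
    using streams[OF \<open>closed Q\<close>] Bomega_beq_cong by blast
qed

theorem mainTheorem12:
  fixes etas :: "nat \<Rightarrow> lterm" and IOm etaOm :: lterm
  assumes etas_closed: "\<And>i. closed (etas i)"
    and etas_eff: "\<exists>E. closed E \<and> (\<forall>n. beq (App E (church n)) (etas n))"
    and etas_red: "\<And>i. beta_eta_red (etas i) I_term"
    and IOm_closed: "closed IOm" and etaOm_closed: "closed etaOm"
    and IOm_eq: "\<exists>F. (\<forall>n. beq (App F (church n)) (App (app_Omegas (Var 0) n) (Var 1)))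
                   \<and> beq (App (App IOm (Var 0)) (Var 1)) (stream F)"
    and etaOm_eq: "\<exists>F. (\<forall>n. beq (App F (church n))
                            (App (app_Omegas (Var 0) n) (App (etas n) (Var 1))))
                   \<and> beq (App (App etaOm (Var 0)) (Var 1)) (stream F)"
  shows "Bomega IOm etaOm"
proof (rule Bomega_omega_unsolvable_after_Omegas)
  obtain FI where FI: "\<And>n. beq (App FI (church n)) (App (app_Omegas (Var 0) n) (Var 1))"
      "beq (App (App IOm (Var 0)) (Var 1)) (stream FI)" using IOm_eq by blast
  obtain FE where FE: "\<And>n. beq (App FE (church n))
        (App (app_Omegas (Var 0) n) (App (etas n) (Var 1)))"
      "beq (App (App etaOm (Var 0)) (Var 1)) (stream FE)" using etaOm_eq by blast
  fix P k assume P: "closed P" "unsolvable_after_Omegas k P"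
  show "Bomega (App IOm P) (App etaOm P)"
  proof (rule Bomega_app_via_streams[OF IOm_closed etaOm_closed P(1) FI(2) FE(2)])
    fix Q
    have "Bomega Q (App (etas n) Q)" for n
      using Bw_sym[OF Bomega_app_beta_eta_red_I[OF etas_red]] .
    moreover have "beq (App (subst (subst FI P 0) Q 0) (church n)) (App (app_Omegas P n) Q)" for n
      using beq_subst[OF beq_subst[OF FI(1)[of n], of P 0], of Q 0]
      by (simp add: subst_closed P(1))
    moreover have "beq (App (subst (subst FE P 0) Q 0) (church n))
        (App (app_Omegas P n) (App (etas n) Q))" for n
      using beq_subst[OF beq_subst[OF FE(1)[of n], of P 0], of Q 0]
      by (simp add: subst_closed P(1) etas_closed)
    ultimately show "Bomega (stream (subst (subst FI P 0) Q 0)) (stream (subst (subst FE P 0) Q 0))"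
      by (rule Bomega_stream_app_Omegas[OF P(2)])
  qed
qed

end
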